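(* Let $\bar f:[a,b]\to\mathbb{R}_\mathcal{I}$, $\bar f(x)=[f_l(x),f_r(x)]$. Then $\bar f$ is continuous on $[a,b]$ if and only if $f_l$ and $f_r$ are continuous on $[a,b]$.
   Context: An interval number is a closed interval $\bar a=[a_l,a_r]$ with $a_l<a_r$ real; $\mathbb{R}_\mathcal{I}$ is the set of interval numbers. Write $a_c=(a_l+a_r)/2$, $a_w=(a_r-a_l)/2>0$. Distance: $d(\bar a,\bar b)=\sqrt{(a_c-b_c)^2+(\ln a_w-\ln b_w)^2}$. $\bar f$ is continuous at $x\in[a,b]$ if for every $\varepsilon>0$ there is $\delta>0$ with $d(\bar f(x),\bar f(y))<\varepsilon$ for all $y\in[a,b]$ with $|y-x|<\delta$; continuous on $[a,b]$ if continuous at each point. *)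

theory Defs
  imports "HOL-Analysis.Analysis"
begin

text \<open>An interval number [al, ar] with al < ar is represented by the pair (al, ar).\<close>

definition is_interval_number :: "real \<times> real \<Rightarrow> bool" where
  "is_interval_number A \<longleftrightarrow> fst A < snd A"

definition icenter :: "real \<times> real \<Rightarrow> real" where
  "icenter A = (fst A + snd A) / 2"

definition iwidth :: "real \<times> real \<Rightarrow> real" where
  "iwidth A = (snd A - fst A) / 2"

definition idist :: "real \<times> real \<Rightarrow> real \<times> real \<Rightarrow> real" where
  "idist A B = sqrt ((icenter A - icenter B)^2 + (ln (iwidth A) - ln (iwidth B))^2)"

definition icontinuous_at :: "real \<Rightarrow> real \<Rightarrow> (real \<Rightarrow> real \<times> real) \<Rightarrow> real \<Rightarrow> bool" where
  "icontinuous_at a b F x \<longleftrightarrow>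
     (\<forall>\<epsilon>>0. \<exists>\<delta>>0. \<forall>y\<in>{a..b}. \<bar>y - x\<bar> < \<delta> \<longrightarrow> idist (F x) (F y) < \<epsilon>)"

definition icontinuous_on :: "real \<Rightarrow> real \<Rightarrow> (real \<Rightarrow> real \<times> real) \<Rightarrow> bool" where
  "icontinuous_on a b F \<longleftrightarrow> (\<forall>x\<in>{a..b}. icontinuous_at a b F x)"

end

theory Submission
  imports Defs
begin

text \<open>The coordinates \<open>(a\<^sub>c, ln a\<^sub>w)\<close> embed interval numbers isometrically into the
  Euclidean plane, so \<open>f\<close> is continuous iff its centre \<open>(f\<^sub>l + f\<^sub>r)/2\<close> and its log
  half-width \<open>ln ((f\<^sub>r - f\<^sub>l)/2)\<close> are. Since \<open>ln\<close> is a homeomorphism of the positive reals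
  onto \<open>\<real>\<close>, and centre and half-width are an invertible linear change of the endpoints,
  this is equivalent to continuity of \<open>f\<^sub>l\<close> and \<open>f\<^sub>r\<close>.\<close>

lemma idist_eq_dist:
  "idist A B = dist (icenter A, ln (iwidth A)) (icenter B, ln (iwidth B))"
  unfolding idist_def dist_Pair_Pair dist_real_def by simp

lemma icontinuous_on_iff_continuous_on:
  "icontinuous_on a b F \<longleftrightarrow>
   continuous_on {a..b} (\<lambda>x. (icenter (F x), ln (iwidth (F x))))"
  unfolding icontinuous_on_def icontinuous_at_def continuous_on_eq_continuous_within
    continuous_within_eps_delta idist_eq_dist
  by (simp add: dist_real_def dist_commute abs_minus_commute)

lemma continuous_on_Pair_iff:
  "continuous_on S (\<lambda>x. (f x, g x)) \<longleftrightarrow> continuous_on S f \<and> continuous_on S g"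
proof
  assume "continuous_on S (\<lambda>x. (f x, g x))"
  from continuous_on_fst[OF this] continuous_on_snd[OF this]
  show "continuous_on S f \<and> continuous_on S g" by simp
qed (auto intro: continuous_on_Pair)

lemma continuous_on_ln_iff:
  fixes g :: "'a::topological_space \<Rightarrow> real"
  assumes pos: "\<And>x. x \<in> S \<Longrightarrow> g x > 0"
  shows "continuous_on S (\<lambda>x. ln (g x)) \<longleftrightarrow> continuous_on S g"
proof
  assume "continuous_on S (\<lambda>x. ln (g x))"
  then have "continuous_on S (\<lambda>x. exp (ln (g x)))"
    by (rule continuous_on_exp)
  then show "continuous_on S g"
    by (rule continuous_on_eq) (simp add: pos)
next
  assume "continuous_on S g"
  then show "continuous_on S (\<lambda>x. ln (g x))"
    by (rule continuous_on_ln) (use pos in force)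
qed

lemma continuous_on_midpoint_halfwidth_iff:
  fixes l r :: "'a::topological_space \<Rightarrow> real"
  shows "continuous_on S (\<lambda>x. (l x + r x) / 2) \<and> continuous_on S (\<lambda>x. (r x - l x) / 2)
     \<longleftrightarrow> continuous_on S l \<and> continuous_on S r"
proof
  let ?c = "\<lambda>x. (l x + r x) / 2" and ?w = "\<lambda>x. (r x - l x) / 2"
  assume "continuous_on S ?c \<and> continuous_on S ?w"
  then have "continuous_on S (\<lambda>x. ?c x - ?w x)" "continuous_on S (\<lambda>x. ?c x + ?w x)"
    by (auto intro!: continuous_intros)
  then show "continuous_on S l \<and> continuous_on S r"
    by (simp add: field_simps)
qed (auto intro!: continuous_intros)

theorem theorem3p5:
  fixes a b :: real and fl fr :: "real \<Rightarrow> real"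
  assumes "\<forall>x\<in>{a..b}. is_interval_number (fl x, fr x)"
  shows "icontinuous_on a b (\<lambda>x. (fl x, fr x)) \<longleftrightarrow>
         continuous_on {a..b} fl \<and> continuous_on {a..b} fr"
proof -
  let ?c = "\<lambda>x. (fl x + fr x) / 2" and ?w = "\<lambda>x. (fr x - fl x) / 2"
  have width_pos: "\<And>x. x \<in> {a..b} \<Longrightarrow> ?w x > 0"
    using assms by (auto simp: is_interval_number_def)
  have "icontinuous_on a b (\<lambda>x. (fl x, fr x)) \<longleftrightarrow>
        continuous_on {a..b} (\<lambda>x. (?c x, ln (?w x)))"
    by (simp only: icontinuous_on_iff_continuous_on icenter_def iwidth_def fst_conv snd_conv)
  also have "\<dots> \<longleftrightarrow> continuous_on {a..b} ?c \<and> continuous_on {a..b} (\<lambda>x. ln (?w x))"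
    by (rule continuous_on_Pair_iff)
  also have "\<dots> \<longleftrightarrow> continuous_on {a..b} ?c \<and> continuous_on {a..b} ?w"
    using continuous_on_ln_iff[of "{a..b}" ?w, OF width_pos] by simp
  also have "\<dots> \<longleftrightarrow> continuous_on {a..b} fl \<and> continuous_on {a..b} fr"
    by (rule continuous_on_midpoint_halfwidth_iff)
  finally show ?thesis .
qed

end
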